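(* Let $(A,E)$ be a $B$-valued Banach noncommutative probability space and $a\in A$. Let $\mathcal C_a(b)=E((1-ba)^{-1}b)$ for $\|b\|<\|a\|^{-1}$, and let $\mathcal C_a^{\langle-1\rangle}$ be its compositional inverse, analytic on a neighborhood of $0$ (it exists because the Fréchet derivative of $\mathcal C_a$ at $0$ is the identity). Then there is a unique $B$-valued analytic function $R_a$ defined on a neighborhood of $0$ in $B$ such that \[ \mathcal C_a^{\langle-1\rangle}(b)=(1+bR_a(b))^{-1}b=b(1+R_a(b)b)^{-1} \] for all $b$ in a neighborhood of $0$.
   Context: $B$ is a unital complex Banach algebra. A $B$-valued Banach noncommutative probability space is a pair $(A,E)$ where $A$ is a unital Banach algebra containing an isometrically embedded copy of $B$ as a unital subalgebra and $E:A\to B$ is a bounded projection with $E(b_1ab_2)=b_1E(a)b_2$ for $a\in A$, $b_1,b_2\in B$. The function $R_a$ is called the R-transform of $a$. *)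

theory Defs
  imports "HOL-Analysis.Analysis"
begin

definition is_unit_el :: "'a::ring_1 \<Rightarrow> bool" where
  "is_unit_el x \<longleftrightarrow> (\<exists>y. x * y = 1 \<and> y * x = 1)"

definition ainv :: "'a::ring_1 \<Rightarrow> 'a" where
  "ainv x = (if is_unit_el x then (THE y. x * y = 1 \<and> y * x = 1) else 0)"

text \<open>Complex scalar multiplication is then
  c . x = kappa c * x.\<close>

definition complex_structure :: "(complex \<Rightarrow> 'a::real_normed_algebra_1) \<Rightarrow> bool" where
  "complex_structure \<kappa> \<longleftrightarrow>
     (\<forall>c d. \<kappa> (c + d) = \<kappa> c + \<kappa> d) \<and>
     (\<forall>c d. \<kappa> (c * d) = \<kappa> c * \<kappa> d) \<and>
     (\<forall>r. \<kappa> (complex_of_real r) = of_real r) \<and>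
     (\<forall>c x. \<kappa> c * x = x * \<kappa> c) \<and>
     (\<forall>c x. norm (\<kappa> c * x) = cmod c * norm x)"

text \<open>Analytic (= Frechet holomorphic) maps on an open set of a complex Banach space:
  Frechet differentiable at every point with complex-linear derivative.\<close>

definition holo_on :: "(complex \<Rightarrow> 'b::real_normed_algebra_1) \<Rightarrow> ('b \<Rightarrow> 'b) \<Rightarrow> 'b set \<Rightarrow> bool" where
  "holo_on \<kappa> f U \<longleftrightarrow> open U \<and>
     (\<forall>x\<in>U. \<exists>L. (f has_derivative L) (at x) \<and> (\<forall>c v. L (\<kappa> c * v) = \<kappa> c * L v))"

definition cauchy_tr :: "('b \<Rightarrow> 'a::real_normed_algebra_1) \<Rightarrow> ('a \<Rightarrow> 'b) \<Rightarrow> 'a \<Rightarrow> 'b \<Rightarrow> 'b" where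
  "cauchy_tr \<iota> E a b = E (ainv (1 - \<iota> b * a) * \<iota> b)"

definition R_rel :: "('b \<Rightarrow> 'b) \<Rightarrow> ('b \<Rightarrow> 'b::real_normed_algebra_1) \<Rightarrow> 'b \<Rightarrow> bool" where
  "R_rel G R b \<longleftrightarrow> is_unit_el (1 + b * R b) \<and> is_unit_el (1 + R b * b) \<and>
     G b = ainv (1 + b * R b) * b \<and> G b = b * ainv (1 + R b * b)"

end

theory Submission
  imports Defs "HOL-Complex_Analysis.Conformal_Mappings"
begin

text \<open>With M(w) = E(a (1 - w a)^-1) the Cauchy transform is C(w) = w + w M(w) w. Put w = G(b),
  so that b = C(w), and R(b) = (1 + M(w) w)^-1 M(w). Then b R(b) = w M(w) and R(b) b = M(w) w,
  so (1 + b R(b))^-1 b = w = b (1 + R(b) b)^-1; R is analytic because inversion is analytic on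
  the open set of units.

  For uniqueness, the relation determines R(b) whenever b is invertible. Given a small x, a
  norming functional (Hahn-Banach) turns s \<mapsto> (R1 - R2)(x + s) into a scalar holomorphic
  function on a disc; it vanishes on the annulus where x + s is invertible, hence at s = 0.\<close>

section \<open>Invertible elements of a Banach algebra\<close>

lemma ainv_eqI:
  fixes x :: "'a::ring_1"
  assumes "x * y = 1" "y * x = 1"
  shows "ainv x = y"
proof -
  have "z = y" if "x * z = 1 \<and> z * x = 1" for z
    by (metis that assms(1) mult.assoc mult_1_left)
  with assms show ?thesis
    unfolding ainv_def is_unit_el_def by (metis (mono_tags, lifting) the_equality)
qed

lemma is_unit_elI: "(x::'a::ring_1) * y = 1 \<Longrightarrow> y * x = 1 \<Longrightarrow> is_unit_el x"
  unfolding is_unit_el_def by blast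

lemma
  fixes x :: "'a::ring_1"
  assumes "is_unit_el x"
  shows right_ainv: "x * ainv x = 1" and left_ainv: "ainv x * x = 1"
proof -
  obtain y where "x * y = 1" "y * x = 1" using assms unfolding is_unit_el_def by blast
  moreover from this have "ainv x = y" by (rule ainv_eqI)
  ultimately show "x * ainv x = 1" "ainv x * x = 1" by simp_all
qed

lemma
  fixes x y :: "'a::ring_1"
  assumes "is_unit_el x" "is_unit_el y"
  shows is_unit_el_mult: "is_unit_el (x * y)" and ainv_mult: "ainv (x * y) = ainv y * ainv x"
proof -
  have "(x * y) * (ainv y * ainv x) = x * (y * ainv y) * ainv x"
    "(ainv y * ainv x) * (x * y) = ainv y * (ainv x * x) * y"
    by (simp_all add: mult.assoc)
  then have "(x * y) * (ainv y * ainv x) = 1" "(ainv y * ainv x) * (x * y) = 1"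
    using assms by (simp_all add: right_ainv left_ainv)
  then show "is_unit_el (x * y)" "ainv (x * y) = ainv y * ainv x"
    by (auto intro: is_unit_elI ainv_eqI)
qed

lemma ainv_diff_ainv:
  fixes x y :: "'a::ring_1"
  assumes "is_unit_el x" "is_unit_el y"
  shows "ainv y - ainv x = ainv y * (x - y) * ainv x"
proof -
  have "ainv y * (x - y) * ainv x = ainv y * (x * ainv x) - (ainv y * y) * ainv x"
    by (simp add: algebra_simps mult.assoc)
  then show ?thesis using assms by (simp add: right_ainv left_ainv)
qed

lemma norm_mult3_le: "norm ((p::'a::real_normed_algebra) * q * r) \<le> norm p * norm q * norm r"
  by (meson mult_right_mono norm_ge_zero norm_mult_ineq order_trans)

lemma ainv_one_minus_eq_suminf:
  fixes z :: "'a::{real_normed_algebra_1,banach}"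
  assumes "norm z < 1"
  shows "is_unit_el (1 - z)" "ainv (1 - z) = (\<Sum>n. z ^ n)"
proof -
  define S where "S = (\<Sum>n. z ^ n)"
  have sm: "summable (\<lambda>n. z ^ n)" using complete_algebra_summable_geometric[OF assms] .
  have tail: "(\<Sum>n. z ^ Suc n) = S - 1" using suminf_split_head[OF sm] by (simp add: S_def)
  have "z * S = S - 1" "S * z = S - 1"
    using tail suminf_mult[OF sm, of z] suminf_mult2[OF sm, of z]
    by (simp_all add: S_def power_commutes)
  then have "(1 - z) * S = 1" "S * (1 - z) = 1" by (simp_all add: algebra_simps)
  then show "is_unit_el (1 - z)" "ainv (1 - z) = S" by (auto intro: is_unit_elI ainv_eqI)
qed

lemma norm_ainv_one_minus_le:
  fixes z :: "'a::{real_normed_algebra_1,banach}"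
  assumes "norm z < 1"
  shows "norm (ainv (1 - z)) \<le> 1 / (1 - norm z)"
proof -
  have sr: "summable (\<lambda>n. norm z ^ n)" using assms by (simp add: summable_geometric)
  have sn: "summable (\<lambda>n. norm (z ^ n))"
    by (rule summable_comparison_test[OF _ sr]) (simp add: norm_power_ineq)
  have "norm (ainv (1 - z)) \<le> (\<Sum>n. norm (z ^ n))"
    unfolding ainv_one_minus_eq_suminf[OF assms] by (rule summable_norm[OF sn])
  also have "\<dots> \<le> (\<Sum>n. norm z ^ n)" by (rule suminf_le[OF norm_power_ineq sn sr])
  also have "\<dots> = 1 / (1 - norm z)" using suminf_geometric[of "norm z"] assms by simp
  finally show ?thesis .
qed

lemma is_unit_el_one_plus:
  "norm (z::'a::{real_normed_algebra_1,banach}) < 1 \<Longrightarrow> is_unit_el (1 + z)"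
  using ainv_one_minus_eq_suminf(1)[of "- z"] by simp

lemma
  fixes x y :: "'a::{real_normed_algebra_1,banach}"
  assumes x: "is_unit_el x" and close: "norm (ainv x) * norm (y - x) \<le> 1/2"
  shows is_unit_el_perturb: "is_unit_el y"
    and norm_ainv_perturb_le: "norm (ainv y) \<le> 2 * norm (ainv x)"
proof -
  define z where "z = ainv x * (x - y)"
  have z: "norm z \<le> 1/2"
    using close norm_mult_ineq[of "ainv x" "x - y"] by (simp add: z_def norm_minus_commute)
  have y: "y = x * (1 - z)"
    by (simp add: z_def algebra_simps right_ainv[OF x] flip: mult.assoc)
  have u: "is_unit_el (1 - z)" by (rule ainv_one_minus_eq_suminf(1)) (use z in simp)
  show "is_unit_el y" unfolding y using is_unit_el_mult[OF x u] .
  have "norm (ainv y) \<le> norm (ainv (1 - z)) * norm (ainv x)"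
    unfolding y ainv_mult[OF x u] by (rule norm_mult_ineq)
  also have "\<dots> \<le> 2 * norm (ainv x)"
  proof (rule mult_right_mono)
    have "norm (ainv (1 - z)) \<le> 1 / (1 - norm z)" by (rule norm_ainv_one_minus_le) (use z in simp)
    also have "\<dots> \<le> 2" using z by (simp add: field_simps)
    finally show "norm (ainv (1 - z)) \<le> 2" .
  qed simp
  finally show "norm (ainv y) \<le> 2 * norm (ainv x)" .
qed

lemma eventually_is_unit_el:
  fixes x :: "'a::{real_normed_algebra_1,banach}"
  assumes x: "is_unit_el x"
  shows "\<forall>\<^sub>F y in nhds x. is_unit_el y \<and> norm (ainv y) \<le> 2 * norm (ainv x)"
proof -
  define K where "K = norm (ainv x)"
  have K0: "K \<ge> 0" by (simp add: K_def)
  have "\<forall>\<^sub>F y in nhds x. dist y x < 1 / (2 * K + 2)"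
    unfolding eventually_nhds_metric using K0 by (intro exI[of _ "1 / (2 * K + 2)"]) auto
  then show ?thesis
  proof (rule eventually_mono)
    fix y assume "dist y x < 1 / (2 * K + 2)"
    then have "K * norm (y - x) \<le> K * (1 / (2 * K + 2))"
      by (intro mult_left_mono) (simp_all add: dist_norm K_def)
    also have "\<dots> \<le> 1/2" using K0 by (simp add: divide_le_eq)
    finally have "norm (ainv x) * norm (y - x) \<le> 1/2" by (simp add: K_def)
    then show "is_unit_el y \<and> norm (ainv y) \<le> 2 * norm (ainv x)"
      using is_unit_el_perturb[OF x] norm_ainv_perturb_le[OF x] by blast
  qed
qed

lemma isCont_ainv:
  fixes x :: "'a::{real_normed_algebra_1,banach}"
  assumes x: "is_unit_el x"
  shows "isCont ainv x"
proof -
  define K where "K = norm (ainv x)"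
  have "\<forall>\<^sub>F y in at x. norm (ainv y - ainv x) \<le> 2 * K * K * norm (y - x)"
    using eventually_is_unit_el[OF x] unfolding eventually_nhds_conv_at
  proof (rule eventually_mono[OF conjunct1])
    fix y :: 'a assume y: "is_unit_el y \<and> norm (ainv y) \<le> 2 * norm (ainv x)"
    have "norm (ainv y - ainv x) \<le> norm (ainv y) * norm (x - y) * K"
      unfolding ainv_diff_ainv[OF x conjunct1[OF y]] K_def by (rule norm_mult3_le)
    also have "\<dots> \<le> (2 * K) * norm (x - y) * K"
      by (intro mult_right_mono) (use y in \<open>simp_all add: K_def\<close>)
    finally show "norm (ainv y - ainv x) \<le> 2 * K * K * norm (y - x)"
      by (simp add: norm_minus_commute mult.commute mult.left_commute)
  qed
  moreover have "((\<lambda>y. 2 * K * K * norm (y - x)) \<longlongrightarrow> 0) (at x)"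
    by (intro tendsto_mult_right_zero tendsto_norm_zero LIM_zero tendsto_ident_at)
  ultimately have "((\<lambda>y. ainv y - ainv x) \<longlongrightarrow> 0) (at x)"
    by (rule Lim_null_comparison)
  then show ?thesis
    by (simp add: isCont_def LIM_zero_iff)
qed

lemma has_derivative_ainv:
  fixes x :: "'a::{real_normed_algebra_1,banach}"
  assumes x: "is_unit_el x"
  shows "(ainv has_derivative (\<lambda>h. - (ainv x * h * ainv x))) (at x)"
  unfolding has_derivative_iff_norm
proof
  show "bounded_linear (\<lambda>h. - (ainv x * h * ainv x))"
    by (intro bounded_linear_minus bounded_linear_compose[OF bounded_linear_mult_left]
        bounded_linear_mult_right)
  define K where "K = norm (ainv x)"
  have "\<forall>\<^sub>F y in at x. norm (ainv y - ainv x + ainv x * (y - x) * ainv x)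
      \<le> K * norm (ainv y - ainv x) * norm (y - x)"
    using eventually_is_unit_el[OF x] unfolding eventually_nhds_conv_at
  proof (rule eventually_mono[OF conjunct1])
    fix y :: 'a assume "is_unit_el y \<and> norm (ainv y) \<le> 2 * norm (ainv x)"
    then have "ainv y - ainv x + ainv x * (y - x) * ainv x = (ainv x - ainv y) * (y - x) * ainv x"
      using ainv_diff_ainv[OF x] by (simp add: algebra_simps)
    also have "norm \<dots> \<le> norm (ainv x - ainv y) * norm (y - x) * K"
      unfolding K_def by (rule norm_mult3_le)
    finally show "norm (ainv y - ainv x + ainv x * (y - x) * ainv x)
      \<le> K * norm (ainv y - ainv x) * norm (y - x)"
      by (simp add: norm_minus_commute mult_ac)
  qed
  then have "\<forall>\<^sub>F y in at x. norm (norm (ainv y - ainv x - - (ainv x * (y - x) * ainv x)) / norm (y - x))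
      \<le> K * norm (ainv y - ainv x)"
    by (rule eventually_mono) (simp add: divide_le_eq)
  moreover have "((\<lambda>y. K * norm (ainv y - ainv x)) \<longlongrightarrow> 0) (at x)"
    using isCont_ainv[OF x] unfolding isCont_def
    by (intro tendsto_mult_right_zero tendsto_norm_zero LIM_zero)
  ultimately show "((\<lambda>y. norm (ainv y - ainv x - - (ainv x * (y - x) * ainv x)) / norm (y - x))
      \<longlongrightarrow> 0) (at x within UNIV)"
    by (auto intro: Lim_null_comparison)
qed

section \<open>Norming functionals on real normed spaces\<close>

text \<open>Graphs of linear functionals on subspaces that are dominated by the norm and take the value
  norm v at v; a maximal one (Zorn) is total, which is the Hahn-Banach theorem in the form
  needed here.\<close>

definition norm_dominated_graph :: "'a::real_normed_vector \<Rightarrow> ('a \<times> real) set \<Rightarrow> bool" where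
  "norm_dominated_graph v g \<longleftrightarrow>
     (\<forall>x r s. (x, r) \<in> g \<longrightarrow> (x, s) \<in> g \<longrightarrow> r = s) \<and>
     (\<forall>x r y s. (x, r) \<in> g \<longrightarrow> (y, s) \<in> g \<longrightarrow> (x + y, r + s) \<in> g) \<and>
     (\<forall>x r c. (x, r) \<in> g \<longrightarrow> (c *\<^sub>R x, c * r) \<in> g) \<and>
     (\<forall>x r. (x, r) \<in> g \<longrightarrow> r \<le> norm x) \<and>
     (v, norm v) \<in> g"

lemma
  assumes "norm_dominated_graph v g"
  shows norm_dominated_graph_single_valued: "(x, r) \<in> g \<Longrightarrow> (x, s) \<in> g \<Longrightarrow> r = s"
    and norm_dominated_graph_add: "(x, r) \<in> g \<Longrightarrow> (y, s) \<in> g \<Longrightarrow> (x + y, r + s) \<in> g"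
    and norm_dominated_graph_scale: "(x, r) \<in> g \<Longrightarrow> (c *\<^sub>R x, c * r) \<in> g"
    and norm_dominated_graph_le_norm: "(x, r) \<in> g \<Longrightarrow> r \<le> norm x"
    and norm_dominated_graph_norming: "(v, norm v) \<in> g"
  using assms unfolding norm_dominated_graph_def by blast+

lemma norm_dominated_graph_line:
  fixes v :: "'a::real_normed_vector"
  assumes "v \<noteq> 0"
  shows "norm_dominated_graph v {(c *\<^sub>R v, c * norm v) | c. True}"
proof -
  have "c * norm v \<le> \<bar>c\<bar> * norm v" for c by (simp add: mult_right_mono)
  moreover have "(1 *\<^sub>R v, 1 * norm v) \<in> {(c *\<^sub>R v, c * norm v) | c. True}" by blast
  ultimately show ?thesis
    using assms unfolding norm_dominated_graph_def
    by (auto simp: scaleR_add_left[symmetric] distrib_right[symmetric] simp del: scaleR_add_left)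
qed

lemma norm_dominated_graph_Union:
  assumes "C \<noteq> {}" "\<forall>g\<in>C. norm_dominated_graph v g" "chain\<^sub>\<subseteq> C"
  shows "norm_dominated_graph v (\<Union>C)"
proof -
  have common: "\<exists>g\<in>C. p \<in> g \<and> q \<in> g" if "p \<in> \<Union>C" "q \<in> \<Union>C" for p q
    using that assms(3) unfolding chain_subset_def by blast
  from assms(1) obtain g0 where "g0 \<in> C" by blast
  with assms(2) common show ?thesis
    unfolding norm_dominated_graph_def Union_iff by meson
qed

definition graph_extension :: "('a::real_vector \<times> real) set \<Rightarrow> 'a \<Rightarrow> real \<Rightarrow> ('a \<times> real) set" where
  "graph_extension M y c = {(x + t *\<^sub>R y, r + t * c) | x r t. (x, r) \<in> M}"

lemma graph_extension_iff:
  "p \<in> graph_extension M y c \<longleftrightarrow> (\<exists>x r t. (x, r) \<in> M \<and> p = (x + t *\<^sub>R y, r + t * c))"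
  unfolding graph_extension_def by blast

lemma norm_dominated_graph_extension_value:
  assumes M: "norm_dominated_graph v M"
  shows "\<exists>c. \<forall>(x, r) \<in> M. r - norm (x - y) \<le> c \<and> c \<le> norm (x + y) - r"
proof -
  have sep: "r - norm (x - y) \<le> norm (z + y) - s" if "(x, r) \<in> M" "(z, s) \<in> M" for x z r s
  proof -
    have "r + s \<le> norm ((x - y) + (z + y))"
      using norm_dominated_graph_le_norm[OF M norm_dominated_graph_add[OF M that]] by simp
    also have "\<dots> \<le> norm (x - y) + norm (z + y)" by (rule norm_triangle_ineq)
    finally show ?thesis by simp
  qed
  define T where "T = {r - norm (x - y) | x r. (x, r) \<in> M}"
  note vM = norm_dominated_graph_norming[OF M]
  have "T \<noteq> {}" "bdd_above T"
    using sep[OF _ vM] vM unfolding T_def bdd_above_def by blast+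
  then have "r - norm (x - y) \<le> Sup T \<and> Sup T \<le> norm (x + y) - r" if "(x, r) \<in> M" for x r
    using that sep by (auto intro!: cSup_upper cSup_least simp: T_def)
  then show ?thesis by blast
qed

lemma graph_extension_le_norm:
  assumes M: "norm_dominated_graph v M"
    and c: "\<forall>(x, r) \<in> M. r - norm (x - y) \<le> c \<and> c \<le> norm (x + y) - r"
    and xr: "(x, r) \<in> M"
  shows "r + t * c \<le> norm (x + t *\<^sub>R y)"
proof -
  have scaled: "s * c \<le> norm (x + s *\<^sub>R y) - r \<and> r - s * c \<le> norm (x - s *\<^sub>R y)" if s: "s > 0" for s
  proof -
    have "x + s *\<^sub>R y = s *\<^sub>R ((1 / s) *\<^sub>R x + y)" "x - s *\<^sub>R y = s *\<^sub>R ((1 / s) *\<^sub>R x - y)"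
      using s by (simp_all add: scaleR_add_right scaleR_diff_right)
    then have "norm (x + s *\<^sub>R y) = s * norm ((1 / s) *\<^sub>R x + y)"
      "norm (x - s *\<^sub>R y) = s * norm ((1 / s) *\<^sub>R x - y)"
      using s by simp_all
    moreover have "c \<le> norm ((1 / s) *\<^sub>R x + y) - (1 / s) * r"
      "(1 / s) * r - norm ((1 / s) *\<^sub>R x - y) \<le> c"
      using c norm_dominated_graph_scale[OF M xr, of "1 / s"] by auto
    ultimately show ?thesis using s by (simp add: field_simps)
  qed
  show ?thesis
  proof (cases t "0::real" rule: linorder_cases)
    case less
    then show ?thesis using scaled[of "- t"] by simp
  next
    case equal
    then show ?thesis using norm_dominated_graph_le_norm[OF M xr] by simp
  next
    case greater
    then show ?thesis using scaled[of t] by simp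
  qed
qed

lemma graph_extension_single_valued:
  assumes M: "norm_dominated_graph v M" and y: "\<forall>r. (y, r) \<notin> M"
    and "(x1, r1) \<in> M" "(x2, r2) \<in> M" "x1 + t1 *\<^sub>R y = x2 + t2 *\<^sub>R y"
  shows "r1 + t1 * c = r2 + t2 * c"
proof -
  have "t1 = t2"
  proof (rule ccontr)
    assume "t1 \<noteq> t2"
    have "(t1 - t2) *\<^sub>R y = x2 + (-1) *\<^sub>R x1"
      using assms(5) by (simp add: scaleR_diff_left algebra_simps)
    then have "(1 / (t1 - t2)) *\<^sub>R ((t1 - t2) *\<^sub>R y) = (1 / (t1 - t2)) *\<^sub>R (x2 + (-1) *\<^sub>R x1)"
      by simp
    then have "y = (1 / (t1 - t2)) *\<^sub>R (x2 + (-1) *\<^sub>R x1)" using \<open>t1 \<noteq> t2\<close> by simp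
    moreover have "((1 / (t1 - t2)) *\<^sub>R (x2 + (-1) *\<^sub>R x1), (1 / (t1 - t2)) * (r2 + (-1) * r1)) \<in> M"
      using assms(3,4) by (intro norm_dominated_graph_scale[OF M] norm_dominated_graph_add[OF M])
    ultimately show False using y by simp
  qed
  with assms(5) have "(x1, r2) \<in> M" using assms(4) by simp
  then show ?thesis
    using \<open>t1 = t2\<close> norm_dominated_graph_single_valued[OF M assms(3)] by simp
qed

lemma norm_dominated_graph_extension:
  assumes M: "norm_dominated_graph v M" and y: "\<forall>r. (y, r) \<notin> M"
    and c: "\<forall>(x, r) \<in> M. r - norm (x - y) \<le> c \<and> c \<le> norm (x + y) - r"
  shows "norm_dominated_graph v (graph_extension M y c)"
  unfolding norm_dominated_graph_def graph_extension_iff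
proof (intro conjI allI impI; (elim exE conjE)?)
  fix x r s x1 r1 t1 x2 r2 t2
  assume "(x1, r1) \<in> M" "(x, r) = (x1 + t1 *\<^sub>R y, r1 + t1 * c)"
    "(x2, r2) \<in> M" "(x, s) = (x2 + t2 *\<^sub>R y, r2 + t2 * c)"
  then show "r = s" using graph_extension_single_valued[OF M y] by simp
next
  fix x r z s x1 r1 t1 x2 r2 t2
  assume "(x1, r1) \<in> M" "(x, r) = (x1 + t1 *\<^sub>R y, r1 + t1 * c)"
    "(x2, r2) \<in> M" "(z, s) = (x2 + t2 *\<^sub>R y, r2 + t2 * c)"
  then show "\<exists>x' r' t. (x', r') \<in> M \<and> (x + z, r + s) = (x' + t *\<^sub>R y, r' + t * c)"
    by (intro exI[of _ "x1 + x2"] exI[of _ "r1 + r2"] exI[of _ "t1 + t2"])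
      (simp add: norm_dominated_graph_add[OF M] algebra_simps)
next
  fix x r a x1 r1 t1
  assume "(x1, r1) \<in> M" "(x, r) = (x1 + t1 *\<^sub>R y, r1 + t1 * c)"
  then show "\<exists>x' r' t. (x', r') \<in> M \<and> (a *\<^sub>R x, a * r) = (x' + t *\<^sub>R y, r' + t * c)"
    by (intro exI[of _ "a *\<^sub>R x1"] exI[of _ "a * r1"] exI[of _ "a * t1"])
      (simp add: norm_dominated_graph_scale[OF M] algebra_simps)
next
  fix x r x1 r1 t1
  assume "(x1, r1) \<in> M" "(x, r) = (x1 + t1 *\<^sub>R y, r1 + t1 * c)"
  then show "r \<le> norm x" using graph_extension_le_norm[OF M c] by simp
next
  show "\<exists>x r t. (x, r) \<in> M \<and> (v, norm v) = (x + t *\<^sub>R y, r + t * c)"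
    using norm_dominated_graph_norming[OF M]
    by (intro exI[of _ v] exI[of _ "norm v"] exI[of _ 0]) simp
qed

lemma norm_dominated_graph_extend:
  assumes M: "norm_dominated_graph v M" and y: "\<forall>r. (y, r) \<notin> M"
  shows "\<exists>M'. norm_dominated_graph v M' \<and> M \<subset> M'"
proof -
  obtain c where c: "\<forall>(x, r) \<in> M. r - norm (x - y) \<le> c \<and> c \<le> norm (x + y) - r"
    using norm_dominated_graph_extension_value[OF M] by blast
  have "M \<subseteq> graph_extension M y c"
  proof clarify
    fix x r assume "(x, r) \<in> M"
    then show "(x, r) \<in> graph_extension M y c"
      unfolding graph_extension_iff by (intro exI[of _ x] exI[of _ r] exI[of _ 0]) simp
  qed
  moreover have "(0, 0) \<in> M"
    using norm_dominated_graph_scale[OF M norm_dominated_graph_norming[OF M], of 0] by simp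
  then have "(y, c) \<in> graph_extension M y c"
    unfolding graph_extension_iff by (intro exI[of _ 0] exI[of _ 0] exI[of _ 1]) simp
  ultimately show ?thesis
    using norm_dominated_graph_extension[OF M y c] y by blast
qed

lemma exists_total_norm_dominated_graph:
  fixes v :: "'a::real_normed_vector"
  assumes "v \<noteq> 0"
  shows "\<exists>M. norm_dominated_graph v M \<and> (\<forall>x. \<exists>r. (x, r) \<in> M)"
proof -
  define A where "A = {g. norm_dominated_graph v g}"
  have "\<exists>U\<in>A. \<forall>X\<in>C. X \<subseteq> U" if C: "C \<in> chains A" for C
  proof (cases "C = {}")
    case True
    then show ?thesis using norm_dominated_graph_line[OF assms] by (auto simp: A_def)
  next
    case False
    with C have "\<Union>C \<in> A" using norm_dominated_graph_Union unfolding chains_def A_def by blast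
    then show ?thesis by blast
  qed
  from Zorn_Lemma2[OF ballI[OF this]] obtain M where "M \<in> A" and maximal: "\<forall>X\<in>A. M \<subseteq> X \<longrightarrow> X = M"
    by blast
  then have M: "norm_dominated_graph v M" by (simp add: A_def)
  have "\<exists>r. (x, r) \<in> M" for x
  proof (rule ccontr)
    assume "\<nexists>r. (x, r) \<in> M"
    then obtain M' where "norm_dominated_graph v M'" "M \<subset> M'"
      using norm_dominated_graph_extend[OF M] by blast
    with maximal show False by (auto simp: A_def)
  qed
  with M show ?thesis by blast
qed

lemma exists_norming_functional:
  fixes v :: "'a::real_normed_vector"
  shows "\<exists>l. bounded_linear l \<and> l v = norm v"
proof (cases "v = 0")
  case True
  then show ?thesis by (intro exI[of _ "\<lambda>_. 0"]) simp
next
  case False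
  then obtain M where M: "norm_dominated_graph v M" and total: "\<And>x. \<exists>r. (x, r) \<in> M"
    using exists_total_norm_dominated_graph by blast
  define l where "l x = (THE r. (x, r) \<in> M)" for x
  have l: "(x, r) \<in> M \<longleftrightarrow> r = l x" for x r
    using total[of x] norm_dominated_graph_single_valued[OF M] unfolding l_def by (metis the_equality)
  have "bounded_linear l"
  proof (rule bounded_linear_intro[where K = 1])
    show "l (x + y) = l x + l y" "l (a *\<^sub>R x) = a *\<^sub>R l x" for x y a
      using norm_dominated_graph_add[OF M] norm_dominated_graph_scale[OF M] l by simp_all
    show "norm (l x) \<le> norm x * 1" for x
    proof -
      have "(x, l x) \<in> M" "(- x, - l x) \<in> M"
        using l norm_dominated_graph_scale[OF M, of x "l x" "-1"] by simp_all
      then have "l x \<le> norm x" "- l x \<le> norm (- x)"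
        by (simp_all only: norm_dominated_graph_le_norm[OF M])
      then show ?thesis by (simp add: abs_le_iff)
    qed
  qed
  moreover have "l v = norm v" using norm_dominated_graph_norming[OF M] l by simp
  ultimately show ?thesis by blast
qed

section \<open>Complex structures and holomorphy\<close>

lemma
  assumes "complex_structure \<kappa>"
  shows complex_structure_add: "\<kappa> (c + d) = \<kappa> c + \<kappa> d"
    and complex_structure_mult: "\<kappa> (c * d) = \<kappa> c * \<kappa> d"
    and complex_structure_of_real: "\<kappa> (complex_of_real r) = of_real r"
    and complex_structure_commute: "\<kappa> c * x = x * \<kappa> c"
    and complex_structure_norm_mult: "norm (\<kappa> c * x) = cmod c * norm x"
  using assms unfolding complex_structure_def by blast+

lemma
  assumes "complex_structure \<kappa>"
  shows complex_structure_zero: "\<kappa> 0 = 0"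
    and complex_structure_one: "\<kappa> 1 = 1"
    and complex_structure_norm: "norm (\<kappa> c) = cmod c"
  using complex_structure_of_real[OF assms, of 0] complex_structure_of_real[OF assms, of 1]
    complex_structure_norm_mult[OF assms, of c 1]
  by simp_all

lemma bounded_linear_complex_structure:
  assumes \<kappa>: "complex_structure \<kappa>"
  shows "bounded_linear \<kappa>"
proof (rule bounded_linear_intro[where K = 1])
  show "\<kappa> (x + y) = \<kappa> x + \<kappa> y" for x y by (rule complex_structure_add[OF \<kappa>])
  show "\<kappa> (r *\<^sub>R x) = r *\<^sub>R \<kappa> x" for r x
    by (simp add: scaleR_conv_of_real complex_structure_mult[OF \<kappa>] complex_structure_of_real[OF \<kappa>])
  show "norm (\<kappa> x) \<le> norm x * 1" for x by (simp add: complex_structure_norm[OF \<kappa>])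
qed

lemma is_unit_el_add_complex_structure:
  fixes x :: "'a::{real_normed_algebra_1,banach}"
  assumes \<kappa>: "complex_structure \<kappa>" and s: "norm x < cmod s"
  shows "is_unit_el (x + \<kappa> s)"
proof -
  have "s \<noteq> 0" using s norm_ge_zero[of x] by auto
  then have "\<kappa> s * \<kappa> (inverse s) = 1" "\<kappa> (inverse s) * \<kappa> s = 1"
    by (simp_all flip: complex_structure_mult[OF \<kappa>] add: complex_structure_one[OF \<kappa>])
  then have unit_s: "is_unit_el (\<kappa> s)" by (rule is_unit_elI)
  have "norm (\<kappa> (inverse s) * x) = norm x / cmod s"
    by (simp add: complex_structure_norm_mult[OF \<kappa>] norm_inverse divide_inverse_commute)
  then have "is_unit_el (1 + \<kappa> (inverse s) * x)"
    using s by (intro is_unit_el_one_plus) (simp add: divide_less_eq)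
  moreover have "x + \<kappa> s = \<kappa> s * (1 + \<kappa> (inverse s) * x)"
    using \<open>\<kappa> s * \<kappa> (inverse s) = 1\<close> by (simp add: distrib_left add.commute flip: mult.assoc)
  ultimately show ?thesis using is_unit_el_mult[OF unit_s] by simp
qed

lemma exists_complexified_functional:
  fixes \<kappa> :: "complex \<Rightarrow> 'a::real_normed_algebra_1" and l :: "'a \<Rightarrow> real"
  assumes \<kappa>: "complex_structure \<kappa>" and l: "bounded_linear l"
  shows "\<exists>\<Lambda>. bounded_linear \<Lambda> \<and> (\<forall>t z. \<Lambda> (\<kappa> t * z) = t * \<Lambda> z) \<and> (\<forall>z. Re (\<Lambda> z) = l z)"
proof (intro exI conjI allI)
  define \<Lambda> where "\<Lambda> z = complex_of_real (l z) - \<i> * complex_of_real (l (\<kappa> \<i> * z))" for z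
  have decompose: "\<kappa> t * z = Re t *\<^sub>R z + Im t *\<^sub>R (\<kappa> \<i> * z)" for t z
  proof -
    have "\<kappa> t = \<kappa> (complex_of_real (Re t) + complex_of_real (Im t) * \<i>)"
      by (rule arg_cong[where f = \<kappa>]) (simp add: complex_eq_iff)
    then show ?thesis
      by (simp add: complex_structure_add[OF \<kappa>] complex_structure_mult[OF \<kappa>]
          complex_structure_of_real[OF \<kappa>] scaleR_conv_of_real distrib_right mult.assoc)
  qed
  have l_scalar: "l (\<kappa> t * z) = Re t * l z + Im t * l (\<kappa> \<i> * z)" for t z
    unfolding decompose[of t z] by (simp add: linear_simps[OF l])
  show "\<Lambda> (\<kappa> t * z) = t * \<Lambda> z" for t z
  proof -
    have "\<kappa> \<i> * (\<kappa> t * z) = \<kappa> (\<i> * t) * z"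
      by (simp only: complex_structure_mult[OF \<kappa>] mult.assoc)
    then show ?thesis
      using l_scalar[of "\<i> * t" z] l_scalar[of t z] by (simp add: \<Lambda>_def complex_eq_iff algebra_simps)
  qed
  show "bounded_linear \<Lambda>"
    unfolding \<Lambda>_def
    by (intro bounded_linear_sub bounded_linear_compose[OF bounded_linear_of_real]
        bounded_linear_compose[OF bounded_linear_mult_right]
        bounded_linear_compose[OF l bounded_linear_mult_right] l)
  show "Re (\<Lambda> z) = l z" for z by (simp add: \<Lambda>_def)
qed

text \<open>Two scalar actions are needed because the Cauchy transform passes through A, where the
  complex numbers act by \<iota> \<circ> \<kappa>.\<close>

definition holo_at ::
    "(complex \<Rightarrow> 'x::real_normed_algebra) \<Rightarrow> (complex \<Rightarrow> 'y::real_normed_algebra) \<Rightarrow> ('x \<Rightarrow> 'y) \<Rightarrow> 'x \<Rightarrow> bool"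
  where "holo_at \<sigma> \<tau> f x \<longleftrightarrow> (\<exists>L. (f has_derivative L) (at x) \<and> (\<forall>c v. L (\<sigma> c * v) = \<tau> c * L v))"

lemma holo_on_iff_holo_at: "holo_on \<kappa> f U \<longleftrightarrow> open U \<and> (\<forall>x\<in>U. holo_at \<kappa> \<kappa> f x)"
  unfolding holo_on_def holo_at_def ..

lemma isCont_holo_at: "holo_at \<sigma> \<tau> f x \<Longrightarrow> isCont f x"
  unfolding holo_at_def using has_derivative_continuous by blast

lemma holo_at_const: "holo_at \<sigma> \<tau> (\<lambda>_. c) x"
  unfolding holo_at_def by (intro exI[of _ "\<lambda>_. 0"]) simp

lemma holo_at_ident: "holo_at \<sigma> \<sigma> (\<lambda>x. x) x"
  unfolding holo_at_def by (intro exI[of _ "\<lambda>h. h"]) simp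

lemma holo_at_add:
  assumes "holo_at \<sigma> \<tau> f x" "holo_at \<sigma> \<tau> g x"
  shows "holo_at \<sigma> \<tau> (\<lambda>x. f x + g x) x"
proof -
  obtain F G where "(f has_derivative F) (at x)" "\<forall>c v. F (\<sigma> c * v) = \<tau> c * F v"
    and "(g has_derivative G) (at x)" "\<forall>c v. G (\<sigma> c * v) = \<tau> c * G v"
    using assms unfolding holo_at_def by blast
  then show ?thesis
    unfolding holo_at_def by (intro exI[of _ "\<lambda>h. F h + G h"]) (simp add: has_derivative_add distrib_left)
qed

lemma holo_at_diff:
  assumes "holo_at \<sigma> \<tau> f x" "holo_at \<sigma> \<tau> g x"
  shows "holo_at \<sigma> \<tau> (\<lambda>x. f x - g x) x"
proof -
  obtain F G where "(f has_derivative F) (at x)" "\<forall>c v. F (\<sigma> c * v) = \<tau> c * F v"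
    and "(g has_derivative G) (at x)" "\<forall>c v. G (\<sigma> c * v) = \<tau> c * G v"
    using assms unfolding holo_at_def by blast
  then show ?thesis
    unfolding holo_at_def by (intro exI[of _ "\<lambda>h. F h - G h"]) (simp add: has_derivative_diff right_diff_distrib)
qed

lemma holo_at_mult:
  assumes f: "holo_at \<sigma> \<tau> f x" and g: "holo_at \<sigma> \<tau> g x"
    and central: "\<And>c y. \<tau> c * y = y * \<tau> c"
  shows "holo_at \<sigma> \<tau> (\<lambda>x. f x * g x) x"
proof -
  obtain F G where F: "(f has_derivative F) (at x)" "\<forall>c v. F (\<sigma> c * v) = \<tau> c * F v"
    and G: "(g has_derivative G) (at x)" "\<forall>c v. G (\<sigma> c * v) = \<tau> c * G v"
    using f g unfolding holo_at_def by blast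
  have "f x * (\<tau> c * G v) + \<tau> c * F v * g x = \<tau> c * (f x * G v + F v * g x)" for c v
    by (simp only: distrib_left mult.assoc[symmetric] central[of c "f x", symmetric])
  with F G show ?thesis
    unfolding holo_at_def
    by (intro exI[of _ "\<lambda>h. f x * G h + F h * g x"]) (simp add: has_derivative_mult)
qed

lemma holo_at_bounded_linear:
  assumes f: "holo_at \<sigma> \<tau> f x" and T: "bounded_linear T" "\<And>c v. T (\<tau> c * v) = \<rho> c * T v"
  shows "holo_at \<sigma> \<rho> (\<lambda>x. T (f x)) x"
proof -
  obtain F where "(f has_derivative F) (at x)" "\<forall>c v. F (\<sigma> c * v) = \<tau> c * F v"
    using f unfolding holo_at_def by blast
  with T show ?thesis
    unfolding holo_at_def
    by (intro exI[of _ "\<lambda>h. T (F h)"]) (simp add: bounded_linear.has_derivative)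
qed

lemma holo_at_compose:
  assumes "holo_at \<sigma> \<tau> f x" "holo_at \<tau> \<rho> g (f x)"
  shows "holo_at \<sigma> \<rho> (\<lambda>x. g (f x)) x"
proof -
  obtain F G where "(f has_derivative F) (at x)" "\<forall>c v. F (\<sigma> c * v) = \<tau> c * F v"
    and "(g has_derivative G) (at (f x))" "\<forall>c v. G (\<tau> c * v) = \<rho> c * G v"
    using assms unfolding holo_at_def by blast
  then show ?thesis
    unfolding holo_at_def
    by (intro exI[of _ "\<lambda>h. G (F h)"]) (simp add: has_derivative_compose[of f F x UNIV g G])
qed

lemma holo_at_ainv:
  fixes \<tau> :: "complex \<Rightarrow> 'y::{real_normed_algebra_1,banach}"
  assumes "is_unit_el y" and central: "\<And>c z. \<tau> c * z = z * \<tau> c"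
  shows "holo_at \<tau> \<tau> ainv y"
  unfolding holo_at_def
proof (intro exI conjI allI)
  show "(ainv has_derivative (\<lambda>h. - (ainv y * h * ainv y))) (at y)"
    by (rule has_derivative_ainv[OF assms(1)])
  show "- (ainv y * (\<tau> c * v) * ainv y) = \<tau> c * - (ainv y * v * ainv y)" for c v
    by (simp only: mult_minus_right mult.assoc[symmetric] central[of c "ainv y", symmetric])
qed

section \<open>The R-transform\<close>

lemma R_rel_of_cauchy_eq:
  fixes F w :: "'b::real_normed_algebra_1"
  assumes "G b = w" "b = w + w * F * w"
    and unit1: "is_unit_el (1 + F * w)" and unit2: "is_unit_el (1 + w * F)"
    and "R b = ainv (1 + F * w) * F"
  shows "R_rel G R b"
proof -
  have b1: "b = w * (1 + F * w)" and b2: "b = (1 + w * F) * w"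
    using assms(2) by (simp_all add: algebra_simps)
  have "b * R b = w * ((1 + F * w) * ainv (1 + F * w)) * F"
    unfolding assms(5) by (subst b1) (simp only: mult.assoc)
  then have bR: "b * R b = w * F" using right_ainv[OF unit1] by simp
  have "R b * b = ainv (1 + F * w) * (F * (1 + w * F)) * w"
    unfolding assms(5) by (subst b2) (simp only: mult.assoc)
  also have "F * (1 + w * F) = (1 + F * w) * F" by (simp add: algebra_simps)
  finally have Rb: "R b * b = F * w" using left_ainv[OF unit1] by (simp add: mult.assoc[symmetric])
  have "ainv (1 + b * R b) * b = (ainv (1 + w * F) * (1 + w * F)) * w"
    unfolding bR by (subst b2) (simp only: mult.assoc)
  moreover have "b * ainv (1 + R b * b) = w * ((1 + F * w) * ainv (1 + F * w))"
    unfolding Rb by (subst b1) (simp only: mult.assoc)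
  ultimately show ?thesis
    unfolding R_rel_def bR Rb assms(1)
    using unit1 unit2 left_ainv[OF unit2] right_ainv[OF unit1] by simp
qed

lemma R_rel_unique_at_unit:
  fixes y :: "'b::real_normed_algebra_1"
  assumes R1: "R_rel G R1 y" and R2: "R_rel G R2 y" and y: "is_unit_el y"
  shows "R1 y = R2 y"
proof -
  have e: "(1 + y * R1 y) * G y = y" "(1 + y * R2 y) * G y = y" "G y * (1 + R2 y * y) = y"
    using R1 R2 right_ainv[of "1 + y * R1 y"] right_ainv[of "1 + y * R2 y"]
      left_ainv[of "1 + R2 y * y"]
    unfolding R_rel_def by (metis mult.assoc mult_1_left mult_1_right)+
  then have "G y + y * R1 y * G y = G y + y * R2 y * G y" by (simp add: distrib_right)
  then have "y * (R1 y - R2 y) * G y = 0" by (simp add: left_diff_distrib right_diff_distrib)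
  then have "y * (R1 y - R2 y) * (G y * (1 + R2 y * y)) = 0" by (simp add: mult.assoc[symmetric])
  then have "ainv y * (y * (R1 y - R2 y) * y) * ainv y = 0" by (simp add: e(3))
  then have "(ainv y * y) * (R1 y - R2 y) * (y * ainv y) = 0" by (simp only: mult.assoc)
  then show ?thesis using left_ainv[OF y] right_ainv[OF y] by simp
qed

text \<open>moment_tr \<iota> E a is the moment generating series w \<mapsto> \<Sum>n E(a (w a)^n), the M of the proof
  sketch, and R_param gives R(b) as a function of w = G(b).\<close>

definition moment_tr :: "('b \<Rightarrow> 'a::real_normed_algebra_1) \<Rightarrow> ('a \<Rightarrow> 'b) \<Rightarrow> 'a \<Rightarrow> 'b \<Rightarrow> 'b" where
  "moment_tr \<iota> E a w = E (a * ainv (1 - \<iota> w * a))"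

definition R_param :: "('b \<Rightarrow> 'a::real_normed_algebra_1) \<Rightarrow> ('a \<Rightarrow> 'b) \<Rightarrow> 'a \<Rightarrow> 'b \<Rightarrow> 'b::real_normed_algebra_1" where
  "R_param \<iota> E a w = ainv (1 + moment_tr \<iota> E a w * w) * moment_tr \<iota> E a w"

lemma isCont_eventually_norm_less:
  assumes "isCont f x" "norm (f x) < e"
  shows "\<forall>\<^sub>F y in nhds x. norm (f y) < e"
  using order_tendstoD(2)[OF tendsto_norm[OF assms(1)[unfolded isCont_def]] assms(2)] assms(2)
  unfolding eventually_nhds_conv_at by simp

locale banach_nc_probability_space =
  fixes \<kappa> :: "complex \<Rightarrow> 'b::{real_normed_algebra_1,banach}"
    and \<iota> :: "'b \<Rightarrow> 'a::{real_normed_algebra_1,banach}"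
    and E :: "'a \<Rightarrow> 'b"
  assumes B_complex: "complex_structure \<kappa>"
    and A_complex: "complex_structure (\<iota> \<circ> \<kappa>)"
    and iota_lin: "bounded_linear \<iota>"
    and iota_isom: "\<And>b. norm (\<iota> b) = norm b"
    and iota_mult: "\<And>b1 b2. \<iota> (b1 * b2) = \<iota> b1 * \<iota> b2"
    and iota_one: "\<iota> 1 = 1"
    and E_lin: "bounded_linear E"
    and E_proj: "\<And>b. E (\<iota> b) = b"
    and E_bimod: "\<And>b1 b2 x. E (\<iota> b1 * x * \<iota> b2) = b1 * E x * b2"
begin

lemma E_scalar: "E (\<iota> (\<kappa> c) * x) = \<kappa> c * E x"
  using E_bimod[of "\<kappa> c" x 1] iota_one by simp

lemma is_unit_el_one_minus_iota_mult:
  "norm w * norm a < 1 \<Longrightarrow> is_unit_el (1 - \<iota> w * a)"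
  using norm_mult_ineq[of "\<iota> w" a] iota_isom by (intro ainv_one_minus_eq_suminf(1)) simp

lemma cauchy_tr_eq_moment_tr:
  assumes "norm w * norm a < 1"
  shows "cauchy_tr \<iota> E a w = w + w * moment_tr \<iota> E a w * w"
proof -
  define Y where "Y = ainv (1 - \<iota> w * a)"
  have "(1 - \<iota> w * a) * Y = 1"
    unfolding Y_def by (rule right_ainv[OF is_unit_el_one_minus_iota_mult[OF assms]])
  then have "Y = 1 + \<iota> w * (a * Y)" by (simp add: algebra_simps)
  then have "Y * \<iota> w = (1 + \<iota> w * (a * Y)) * \<iota> w" by (rule arg_cong[where f = "\<lambda>z. z * \<iota> w"])
  also have "\<dots> = \<iota> w + \<iota> w * (a * Y) * \<iota> w" by (simp add: distrib_right)
  finally have "Y * \<iota> w = \<iota> w + \<iota> w * (a * Y) * \<iota> w" .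
  then show ?thesis
    unfolding cauchy_tr_def moment_tr_def Y_def[symmetric]
    by (simp add: linear_simps(1)[OF E_lin] E_proj E_bimod)
qed

lemma holo_at_moment_tr:
  assumes "norm w * norm a < 1"
  shows "holo_at \<kappa> \<kappa> (moment_tr \<iota> E a) w"
proof -
  define \<tau> where "\<tau> c = \<iota> (\<kappa> c)" for c
  have central: "\<tau> c * x = x * \<tau> c" for c x
    using complex_structure_commute[OF A_complex] by (simp add: \<tau>_def)
  have "holo_at \<kappa> \<tau> (\<lambda>w. \<iota> w) w"
    using holo_at_bounded_linear[OF holo_at_ident iota_lin] by (simp add: \<tau>_def iota_mult)
  then have "holo_at \<kappa> \<tau> (\<lambda>w. \<iota> w * a) w"
    by (rule holo_at_mult[OF _ holo_at_const]) (rule central)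
  then have "holo_at \<kappa> \<tau> (\<lambda>w. 1 - \<iota> w * a) w"
    by (rule holo_at_diff[OF holo_at_const])
  moreover have "holo_at \<tau> \<tau> ainv (1 - \<iota> w * a)"
    by (rule holo_at_ainv[OF is_unit_el_one_minus_iota_mult[OF assms]]) (rule central)
  ultimately have "holo_at \<kappa> \<tau> (\<lambda>w. ainv (1 - \<iota> w * a)) w"
    by (rule holo_at_compose)
  then have "holo_at \<kappa> \<tau> (\<lambda>w. a * ainv (1 - \<iota> w * a)) w"
    by (rule holo_at_mult[OF holo_at_const]) (rule central)
  then show ?thesis
    unfolding moment_tr_def by (rule holo_at_bounded_linear[OF _ E_lin]) (simp add: \<tau>_def E_scalar)
qed

lemma holo_at_R_param:
  assumes "norm w * norm a < 1" "norm (moment_tr \<iota> E a w * w) < 1"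
  shows "holo_at \<kappa> \<kappa> (R_param \<iota> E a) w"
proof -
  note M = holo_at_moment_tr[OF assms(1)]
  note central = complex_structure_commute[OF B_complex]
  have "holo_at \<kappa> \<kappa> (\<lambda>w. 1 + moment_tr \<iota> E a w * w) w"
    by (intro holo_at_add holo_at_const holo_at_mult[OF M holo_at_ident] central)
  moreover have "holo_at \<kappa> \<kappa> ainv (1 + moment_tr \<iota> E a w * w)"
    using assms(2) by (intro holo_at_ainv is_unit_el_one_plus central)
  ultimately have "holo_at \<kappa> \<kappa> (\<lambda>w. ainv (1 + moment_tr \<iota> E a w * w)) w"
    by (rule holo_at_compose)
  then show ?thesis unfolding R_param_def by (rule holo_at_mult[OF _ M central])
qed

lemma eventually_moment_tr_small:
  "\<forall>\<^sub>F w in nhds 0. norm w * norm a < 1 \<and> norm (moment_tr \<iota> E a w * w) < 1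
     \<and> norm (w * moment_tr \<iota> E a w) < 1"
proof -
  note M = holo_at_moment_tr[of 0 a, simplified]
  note central = complex_structure_commute[OF B_complex]
  have "((\<lambda>w. norm w * norm a) \<longlongrightarrow> 0) (nhds 0)"
    by (intro tendsto_mult_left_zero tendsto_norm_zero filterlim_ident)
  then have "\<forall>\<^sub>F w in nhds 0. norm w * norm a < 1" by (rule order_tendstoD(2)) simp
  moreover have "holo_at \<kappa> \<kappa> (\<lambda>w. moment_tr \<iota> E a w * w) 0"
    by (rule holo_at_mult[OF M holo_at_ident]) (rule central)
  moreover have "holo_at \<kappa> \<kappa> (\<lambda>w. w * moment_tr \<iota> E a w) 0"
    by (rule holo_at_mult[OF holo_at_ident M]) (rule central)
  ultimately show ?thesis
    by (intro eventually_conj isCont_eventually_norm_less isCont_holo_at) simp_all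
qed

lemma R_rel_R_param:
  assumes "norm (G b) * norm a < 1" "cauchy_tr \<iota> E a (G b) = b"
    and "norm (moment_tr \<iota> E a (G b) * G b) < 1" "norm (G b * moment_tr \<iota> E a (G b)) < 1"
  shows "R_rel G (\<lambda>b. R_param \<iota> E a (G b)) b"
  using assms cauchy_tr_eq_moment_tr[OF assms(1)]
  by (intro R_rel_of_cauchy_eq[where F = "moment_tr \<iota> E a (G b)"])
    (simp_all add: is_unit_el_one_plus R_param_def)

lemma R_transform_exists:
  assumes G_holo: "\<exists>V. 0 \<in> V \<and> holo_on \<kappa> G V"
    and G_zero: "G 0 = 0"
    and G_right_inv: "eventually (\<lambda>b. norm (G b) * norm a < 1 \<and> cauchy_tr \<iota> E a (G b) = b) (nhds 0)"
  shows "\<exists>R U. 0 \<in> U \<and> holo_on \<kappa> R U \<and> eventually (\<lambda>b. R_rel G R b) (nhds 0)"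
proof -
  obtain V where "0 \<in> V" "open V" and G_at: "\<And>b. b \<in> V \<Longrightarrow> holo_at \<kappa> \<kappa> G b"
    using G_holo unfolding holo_on_iff_holo_at by blast
  have "(G \<longlongrightarrow> G 0) (nhds 0)"
    using isCont_holo_at[OF G_at[OF \<open>0 \<in> V\<close>]] by (simp only: isCont_def tendsto_at_iff_tendsto_nhds)
  then have "filterlim G (nhds 0) (nhds 0)" using G_zero by simp
  then have "\<forall>\<^sub>F b in nhds 0. norm (G b) * norm a < 1 \<and> norm (moment_tr \<iota> E a (G b) * G b) < 1
      \<and> norm (G b * moment_tr \<iota> E a (G b)) < 1"
    using eventually_moment_tr_small unfolding filterlim_iff by blast
  with G_right_inv have "\<forall>\<^sub>F b in nhds 0. cauchy_tr \<iota> E a (G b) = b \<and> norm (G b) * norm a < 1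
      \<and> norm (moment_tr \<iota> E a (G b) * G b) < 1 \<and> norm (G b * moment_tr \<iota> E a (G b)) < 1"
    by (auto elim: eventually_elim2)
  then obtain S where "open S" "0 \<in> S"
    and good: "\<And>b. b \<in> S \<Longrightarrow> cauchy_tr \<iota> E a (G b) = b \<and> norm (G b) * norm a < 1
      \<and> norm (moment_tr \<iota> E a (G b) * G b) < 1 \<and> norm (G b * moment_tr \<iota> E a (G b)) < 1"
    unfolding eventually_nhds by blast
  have "holo_at \<kappa> \<kappa> (\<lambda>b. R_param \<iota> E a (G b)) b" if "b \<in> S \<inter> V" for b
    using that good by (intro holo_at_compose[OF G_at holo_at_R_param]) auto
  moreover have "R_rel G (\<lambda>b. R_param \<iota> E a (G b)) b" if "b \<in> S" for b
    using good[OF that] by (intro R_rel_R_param) auto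
  ultimately show ?thesis
    using \<open>open S\<close> \<open>open V\<close> \<open>0 \<in> S\<close> \<open>0 \<in> V\<close> unfolding holo_on_iff_holo_at eventually_nhds
    by (intro exI[of _ "\<lambda>b. R_param \<iota> E a (G b)"] exI[of _ "S \<inter> V"] conjI exI[of _ S]) auto
qed

end

lemma field_differentiable_holo_at:
  fixes f :: "complex \<Rightarrow> complex"
  assumes "holo_at (\<lambda>c. c) (\<lambda>c. c) f z"
  shows "f field_differentiable (at z)"
proof -
  obtain L where L: "(f has_derivative L) (at z)" "\<forall>c v. L (c * v) = c * L v"
    using assms unfolding holo_at_def by blast
  have "(*) (L 1) = L"
  proof
    fix h show "L 1 * h = L h" using L(2)[rule_format, of h 1] by (simp add: mult.commute)
  qed
  then have "(f has_field_derivative L 1) (at z)"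
    unfolding has_field_derivative_def using L(1) by (simp only:)
  then show ?thesis unfolding field_differentiable_def by blast
qed

lemma holomorphic_on_functional_slice:
  fixes \<kappa> :: "complex \<Rightarrow> 'b::{real_normed_algebra_1,banach}"
  assumes \<kappa>: "complex_structure \<kappa>"
    and \<Lambda>: "bounded_linear \<Lambda>" "\<And>t z. \<Lambda> (\<kappa> t * z) = t * \<Lambda> z"
    and D: "\<And>s. s \<in> S \<Longrightarrow> holo_at \<kappa> \<kappa> D (x + \<kappa> s)"
  shows "(\<lambda>s. \<Lambda> (D (x + \<kappa> s))) holomorphic_on S"
  unfolding holomorphic_on_def
proof (intro ballI, rule field_differentiable_at_within, rule field_differentiable_holo_at)
  fix s assume "s \<in> S"
  have "holo_at (\<lambda>c. c) \<kappa> \<kappa> s"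
    by (rule holo_at_bounded_linear[OF holo_at_ident bounded_linear_complex_structure[OF \<kappa>]])
      (rule complex_structure_mult[OF \<kappa>])
  then have "holo_at (\<lambda>c. c) \<kappa> (\<lambda>s. x + \<kappa> s) s" by (rule holo_at_add[OF holo_at_const])
  then have "holo_at (\<lambda>c. c) \<kappa> (\<lambda>s. D (x + \<kappa> s)) s"
    by (rule holo_at_compose) (rule D[OF \<open>s \<in> S\<close>])
  then show "holo_at (\<lambda>c. c) (\<lambda>c. c) (\<lambda>s. \<Lambda> (D (x + \<kappa> s))) s"
    by (rule holo_at_bounded_linear[OF _ \<Lambda>])
qed

lemma holomorphic_zero_if_zero_on_annulus:
  fixes h :: "complex \<Rightarrow> complex"
  assumes h: "h holomorphic_on ball 0 r" and "0 \<le> \<rho>" "\<rho> < r"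
    and zero: "\<And>s. \<rho> < cmod s \<Longrightarrow> cmod s < r \<Longrightarrow> h s = 0"
  shows "h 0 = 0"
proof (rule analytic_continuation[OF h open_ball connected_ball])
  define m where "m = (\<rho> + r) / 2"
  define \<xi> where "\<xi> = complex_of_real m"
  have m: "0 \<le> m" "2 * m = \<rho> + r" using assms(2,3) by (simp_all add: m_def)
  then have "cmod \<xi> = m" by (simp add: \<xi>_def)
  with m have annulus: "\<rho> < cmod s \<and> cmod s < r" if "s \<in> ball \<xi> ((r - \<rho>) / 2)" for s
    using that norm_triangle_ineq2[of s \<xi>] norm_triangle_ineq2[of \<xi> s]
    by (simp add: dist_norm norm_minus_commute)
  show "ball \<xi> ((r - \<rho>) / 2) \<subseteq> ball 0 r" using annulus by auto
  show "\<xi> \<in> ball 0 r" "\<xi> islimpt ball \<xi> ((r - \<rho>) / 2)" "0 \<in> ball 0 r"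
    using assms(2,3) m by (auto simp: \<xi>_def islimpt_ball)
  show "h s = 0" if "s \<in> ball \<xi> ((r - \<rho>) / 2)" for s using zero annulus[OF that] by blast
qed

lemma zero_on_ball_if_zero_on_units:
  fixes \<kappa> :: "complex \<Rightarrow> 'b::{real_normed_algebra_1,banach}" and D :: "'b \<Rightarrow> 'b"
  assumes \<kappa>: "complex_structure \<kappa>"
    and D_holo: "\<And>y. norm y < \<delta> \<Longrightarrow> holo_at \<kappa> \<kappa> D y"
    and D_units: "\<And>y. norm y < \<delta> \<Longrightarrow> is_unit_el y \<Longrightarrow> D y = 0"
    and x: "norm x < \<delta> / 2"
  shows "D x = 0"
proof -
  obtain l where l: "bounded_linear l" "l (D x) = norm (D x)"
    using exists_norming_functional by blast
  obtain \<Lambda> where \<Lambda>: "bounded_linear \<Lambda>" "\<And>t z. \<Lambda> (\<kappa> t * z) = t * \<Lambda> z" "\<And>z. Re (\<Lambda> z) = l z"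
    using exists_complexified_functional[OF \<kappa> l(1)] by blast
  define r where "r = \<delta> - norm x"
  have near: "norm (x + \<kappa> s) < \<delta>" if "cmod s < r" for s
    using that norm_triangle_ineq[of x "\<kappa> s"] by (simp add: r_def complex_structure_norm[OF \<kappa>])
  have holo: "(\<lambda>s. \<Lambda> (D (x + \<kappa> s))) holomorphic_on ball 0 r"
    using near by (intro holomorphic_on_functional_slice[OF \<kappa> \<Lambda>(1,2)] D_holo) simp
  have zero: "\<Lambda> (D (x + \<kappa> s)) = 0" if "norm x < cmod s" "cmod s < r" for s
    using D_units[OF near is_unit_el_add_complex_structure[OF \<kappa>]] that linear_simps(3)[OF \<Lambda>(1)]
    by simp
  have "\<Lambda> (D (x + \<kappa> 0)) = 0"
    by (rule holomorphic_zero_if_zero_on_annulus[OF holo _ _ zero]) (use x in \<open>simp_all add: r_def\<close>)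
  then have "l (D x) = 0" using \<Lambda>(3)[of "D x"] by (simp add: complex_structure_zero[OF \<kappa>])
  then show ?thesis using l(2) by simp
qed

lemma R_transform_unique:
  fixes \<kappa> :: "complex \<Rightarrow> 'b::{real_normed_algebra_1,banach}"
  assumes \<kappa>: "complex_structure \<kappa>"
    and R1: "0 \<in> U1" "holo_on \<kappa> R1 U1" "eventually (\<lambda>b. R_rel G R1 b) (nhds 0)"
    and R2: "0 \<in> U2" "holo_on \<kappa> R2 U2" "eventually (\<lambda>b. R_rel G R2 b) (nhds 0)"
  shows "eventually (\<lambda>b. R1 b = R2 b) (nhds 0)"
proof -
  have "open (U1 \<inter> U2)" using R1(2) R2(2) by (auto simp: holo_on_def)
  then have "\<forall>\<^sub>F b in nhds 0. b \<in> U1 \<inter> U2 \<and> R_rel G R1 b \<and> R_rel G R2 b"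
    using R1 R2 by (intro eventually_conj eventually_nhds_in_open) auto
  then obtain \<delta> where "\<delta> > 0"
    and near: "\<And>y. norm y < \<delta> \<Longrightarrow> y \<in> U1 \<inter> U2 \<and> R_rel G R1 y \<and> R_rel G R2 y"
    unfolding eventually_nhds_metric by (auto simp: dist_norm)
  have "R1 x - R2 x = 0" if "norm x < \<delta> / 2" for x
  proof (rule zero_on_ball_if_zero_on_units[OF \<kappa> _ _ that])
    show "holo_at \<kappa> \<kappa> (\<lambda>b. R1 b - R2 b) y" if "norm y < \<delta>" for y
      using near[OF that] R1(2) R2(2) by (intro holo_at_diff) (auto simp: holo_on_iff_holo_at)
    show "R1 y - R2 y = 0" if "norm y < \<delta>" "is_unit_el y" for y
      using near[OF that(1)] R_rel_unique_at_unit that(2) by auto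
  qed
  then show ?thesis
    unfolding eventually_nhds_metric using \<open>\<delta> > 0\<close> by (intro exI[of _ "\<delta> / 2"]) (auto simp: dist_norm)
qed

theorem mainTheorem12:
  fixes \<kappa> :: "complex \<Rightarrow> 'b::{real_normed_algebra_1, banach}"
    and \<iota> :: "'b \<Rightarrow> 'a::{real_normed_algebra_1, banach}"
    and E :: "'a \<Rightarrow> 'b"
    and a :: 'a
    and G :: "'b \<Rightarrow> 'b"
  assumes B_complex: "complex_structure \<kappa>"
    and A_complex: "complex_structure (\<iota> \<circ> \<kappa>)"
    and iota_lin: "bounded_linear \<iota>"
    and iota_isom: "\<And>b. norm (\<iota> b) = norm b"
    and iota_mult: "\<And>b1 b2. \<iota> (b1 * b2) = \<iota> b1 * \<iota> b2"
    and iota_one: "\<iota> 1 = 1"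
    and E_lin: "bounded_linear E"
    and E_proj: "\<And>b. E (\<iota> b) = b"
    and E_bimod: "\<And>b1 b2 x. E (\<iota> b1 * x * \<iota> b2) = b1 * E x * b2"
    and G_holo: "\<exists>V. 0 \<in> V \<and> holo_on \<kappa> G V"
    and G_zero: "G 0 = 0"
    and G_right_inv: "eventually (\<lambda>b. norm (G b) * norm a < 1 \<and> cauchy_tr \<iota> E a (G b) = b) (nhds 0)"
    and G_left_inv: "eventually (\<lambda>b. norm b * norm a < 1 \<and> G (cauchy_tr \<iota> E a b) = b) (nhds 0)"
  shows "(\<exists>R U. 0 \<in> U \<and> holo_on \<kappa> R U \<and> eventually (\<lambda>b. R_rel G R b) (nhds 0))
       \<and> (\<forall>R1 R2 U1 U2. 0 \<in> U1 \<and> holo_on \<kappa> R1 U1 \<and> eventually (\<lambda>b. R_rel G R1 b) (nhds 0)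
            \<and> 0 \<in> U2 \<and> holo_on \<kappa> R2 U2 \<and> eventually (\<lambda>b. R_rel G R2 b) (nhds 0)
            \<longrightarrow> eventually (\<lambda>b. R1 b = R2 b) (nhds 0))"
proof -
  interpret banach_nc_probability_space \<kappa> \<iota> E
    by (rule banach_nc_probability_space.intro[OF B_complex A_complex iota_lin iota_isom iota_mult
          iota_one E_lin E_proj E_bimod])
  show ?thesis
    using R_transform_exists[OF G_holo G_zero G_right_inv] R_transform_unique[OF B_complex] by blast
qed

end
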